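(* Let $w\in\mathfrak{S}_n$ be Bruhat irreducible and almost reducible at $(J,i)$. Then $J=\{s_1,\ldots,s_i\}$ or $J=\{s_i,\ldots,s_{n-1}\}$.
   Context: $\mathfrak{S}_n$ is the Coxeter group with $S=\{s_1,\ldots,s_{n-1}\}$, $s_i=(i\ i{+}1)$, length $\ell$. $\supp(x)$ is the set of simple generators in a reduced word for $x$; $D_L(x)=\{s\in S:\ell(sx)<\ell(x)\}$, $D_R(x)=\{s\in S:\ell(xs)<\ell(x)\}$. For $J\subseteq S$, $x=x^Jx_J$ is the parabolic decomposition with $x_J$ in the subgroup $W_J$ generated by $J$ and $x^J$ the minimal-length element of $xW_J$. It is a BP-decomposition if $\supp(x^J)\cap J\subseteq D_L(x_J)$. $w$ is Bruhat irreducible if $\supp(w)=S$ and $w$ cannot be written as $w=w'w''$ with $w',w''\neq e$ and $\supp(w')\cap\supp(w'')=\emptyset$. A Bruhat irreducible $w$ is almost reducible at $(J,i)$ if $w=w^Jw_J$ is a BP-decomposition with $\supp(w^J)\cap J=\{s_i\}$ and $s_i\notin D_L(w)$, $s_i\notin D_R(w)$. *)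

theory Defs
  imports "HOL-Combinatorics.Permutations"
begin

text \<open>Elements of the symmetric group S_n are permutations of {1..n}, i.e. functions
  w :: nat => nat with w permutes {1..n}.  Multiplication xy is composition x o y.
  A simple generator s_i (1 <= i <= n-1) is represented by its index i; S = {1..<n}.\<close>

definition sgen :: "nat \<Rightarrow> nat \<Rightarrow> nat" where
  "sgen i = (\<lambda>x. if x = i then Suc i else if x = Suc i then i else x)"

definition wprod :: "nat list \<Rightarrow> nat \<Rightarrow> nat" where
  "wprod ws = foldr (\<lambda>i acc. sgen i \<circ> acc) ws id"

definition sym_group :: "nat \<Rightarrow> (nat \<Rightarrow> nat) set" where
  "sym_group n = {w. w permutes {1..n}}"

definition is_word :: "nat \<Rightarrow> nat list \<Rightarrow> (nat \<Rightarrow> nat) \<Rightarrow> bool" where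
  "is_word n ws w \<longleftrightarrow> set ws \<subseteq> {1..<n} \<and> wprod ws = w"

definition clen :: "nat \<Rightarrow> (nat \<Rightarrow> nat) \<Rightarrow> nat" where
  "clen n w = (LEAST k. \<exists>ws. is_word n ws w \<and> length ws = k)"

definition reduced_word :: "nat \<Rightarrow> nat list \<Rightarrow> (nat \<Rightarrow> nat) \<Rightarrow> bool" where
  "reduced_word n ws w \<longleftrightarrow> is_word n ws w \<and> length ws = clen n w"

text \<open>Support: the set of generators occurring in a reduced word (independent of the choice).\<close>
definition supp :: "nat \<Rightarrow> (nat \<Rightarrow> nat) \<Rightarrow> nat set" where
  "supp n w = {i. \<exists>ws. reduced_word n ws w \<and> i \<in> set ws}"

definition DL :: "nat \<Rightarrow> (nat \<Rightarrow> nat) \<Rightarrow> nat set" where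
  "DL n x = {i \<in> {1..<n}. clen n (sgen i \<circ> x) < clen n x}"

definition DR :: "nat \<Rightarrow> (nat \<Rightarrow> nat) \<Rightarrow> nat set" where
  "DR n x = {i \<in> {1..<n}. clen n (x \<circ> sgen i) < clen n x}"

definition parab :: "nat set \<Rightarrow> (nat \<Rightarrow> nat) set" where
  "parab J = {wprod ws | ws. set ws \<subseteq> J}"

definition parabolic_decomp :: "nat \<Rightarrow> nat set \<Rightarrow> (nat \<Rightarrow> nat) \<Rightarrow> (nat \<Rightarrow> nat) \<Rightarrow> (nat \<Rightarrow> nat) \<Rightarrow> bool" where
  "parabolic_decomp n J x u v \<longleftrightarrow>
     x = u \<circ> v \<and> v \<in> parab J \<and>
     (\<forall>y \<in> parab J. clen n u \<le> clen n (x \<circ> y))"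

definition BP_decomp :: "nat \<Rightarrow> nat set \<Rightarrow> (nat \<Rightarrow> nat) \<Rightarrow> (nat \<Rightarrow> nat) \<Rightarrow> (nat \<Rightarrow> nat) \<Rightarrow> bool" where
  "BP_decomp n J x u v \<longleftrightarrow> parabolic_decomp n J x u v \<and> supp n u \<inter> J \<subseteq> DL n v"

definition bruhat_irreducible :: "nat \<Rightarrow> (nat \<Rightarrow> nat) \<Rightarrow> bool" where
  "bruhat_irreducible n w \<longleftrightarrow>
     supp n w = {1..<n} \<and>
     \<not> (\<exists>w' w''. w' \<in> sym_group n \<and> w'' \<in> sym_group n \<and> w' \<noteq> id \<and> w'' \<noteq> id \<and>
            w = w' \<circ> w'' \<and> supp n w' \<inter> supp n w'' = {})"

definition almost_reducible :: "nat \<Rightarrow> (nat \<Rightarrow> nat) \<Rightarrow> nat set \<Rightarrow> nat \<Rightarrow> bool" where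
  "almost_reducible n w J i \<longleftrightarrow>
     bruhat_irreducible n w \<and> J \<subseteq> {1..<n} \<and>
     (\<exists>u v. BP_decomp n J w u v \<and> supp n u \<inter> J = {i}) \<and>
     i \<notin> DL n w \<and> i \<notin> DR n w"

end

theory Submission
  imports Defs
begin

text \<open>
  Say that a permutation x splits at m if it maps {1..m} onto itself. Identifying the Coxeter
  length with the number of inversions, one sees that s_m lies in supp x exactly when x does not
  split at m. So a Bruhat irreducible w splits nowhere, and it has no factorisation w = x y with
  x and y each splitting somewhere and every m a splitting point of x or of y.

  In the BP-decomposition w = u v, the element u splits at every point of J except i, and v,
  lying in W_J, splits at every point outside J. Cutting u or v at one of these points into its
  parts acting below and above it yields a forbidden factorisation unless J is an interval
  around i that reaches s_1 as soon as it extends below i and reaches s_(n-1) as soon as it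
  extends above i. It cannot extend on both sides: u is a minimal coset representative, so
  u i < u (i + 1), and together with splitting at i - 1 and at i + 1 this forces u to split at i.
  Finally J = {s_i} would give w = u s_i with l(w) = l(u) + 1, making s_i a right descent of w.
\<close>

lemma sgen_eq_transpose: "sgen i = transpose i (Suc i)"
  by (auto simp: sgen_def transpose_def fun_eq_iff)

lemma sgen_sgen_apply [simp]: "sgen i (sgen i p) = p"
  by (auto simp: sgen_def)

lemma sgen_comp_sgen [simp]: "sgen i \<circ> sgen i = id"
  by (simp add: fun_eq_iff)

lemma sgen_permutes: "1 \<le> i \<Longrightarrow> i < n \<Longrightarrow> sgen i permutes {1..n}"
  unfolding sgen_eq_transpose by (rule permutes_swap_id) auto

lemma wprod_Nil [simp]: "wprod [] = id"
  by (simp add: wprod_def)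

lemma wprod_Cons [simp]: "wprod (i # ws) = sgen i \<circ> wprod ws"
  by (simp add: wprod_def)

lemma wprod_snoc: "wprod (ws @ [j]) = wprod ws \<circ> sgen j"
  by (induction ws) (auto simp: wprod_def)

lemma wprod_permutes: "set ws \<subseteq> {1..<n} \<Longrightarrow> wprod ws permutes {1..n}"
proof (induction ws)
  case (Cons i ws)
  then show ?case
    unfolding wprod_Cons by (intro permutes_compose[OF _ sgen_permutes]) auto
qed (simp add: permutes_id)

lemma wprod_comp_wprod_rev: "wprod ws \<circ> wprod (rev ws) = id"
proof (induction ws)
  case (Cons i ws)
  have "wprod (i # ws) \<circ> wprod (rev (i # ws)) = sgen i \<circ> (wprod ws \<circ> wprod (rev ws)) \<circ> sgen i"
    by (simp only: wprod_Cons rev.simps wprod_snoc comp_assoc)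
  also have "\<dots> = id"
    by (simp only: Cons.IH comp_id sgen_comp_sgen)
  finally show ?case .
qed simp

lemma permutes_comp_sgen: "x permutes {1..n} \<Longrightarrow> 1 \<le> j \<Longrightarrow> j < n \<Longrightarrow> x \<circ> sgen j permutes {1..n}"
  by (metis permutes_compose sgen_permutes)

lemma permutes_apply_Suc_neq: "x permutes A \<Longrightarrow> x (Suc j) \<noteq> x j"
  by (metis n_not_Suc_n permutes_inj injD)

section \<open>Length as number of inversions\<close>

definition inversions :: "nat \<Rightarrow> (nat \<Rightarrow> nat) \<Rightarrow> (nat \<times> nat) set" where
  "inversions n x = {(p, q). 1 \<le> p \<and> p < q \<and> q \<le> n \<and> x q < x p}"

definition ninv :: "nat \<Rightarrow> (nat \<Rightarrow> nat) \<Rightarrow> nat" where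
  "ninv n x = card (inversions n x)"

lemma finite_inversions [simp]: "finite (inversions n x)"
  by (rule finite_subset[of _ "{1..n} \<times> {1..n}"]) (auto simp: inversions_def)

lemma inversions_id: "inversions n id = {}"
  by (auto simp: inversions_def)

lemma adjacent_in_inversions_iff:
  "1 \<le> j \<Longrightarrow> j < n \<Longrightarrow> (j, Suc j) \<in> inversions n x \<longleftrightarrow> x (Suc j) < x j"
  by (auto simp: inversions_def)

lemma inversions_comp_sgen:
  assumes "1 \<le> j" "j < n"
  shows "inversions n (x \<circ> sgen j) - {(j, Suc j)}
       = map_prod (sgen j) (sgen j) ` (inversions n x - {(j, Suc j)})"
proof -
  let ?f = "map_prod (sgen j) (sgen j)"
  have "?f ` A = ?f -` A" for A
    by (auto simp: image_iff) (metis map_prod_simp sgen_sgen_apply prod.exhaust)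
  then show ?thesis
    using assms by (auto simp: inversions_def sgen_def split: if_splits)
qed

lemma card_inversions_comp_sgen:
  assumes "1 \<le> j" "j < n"
  shows "card (inversions n (x \<circ> sgen j) - {(j, Suc j)}) = card (inversions n x - {(j, Suc j)})"
  unfolding inversions_comp_sgen[OF assms]
proof (rule card_image)
  show "inj_on (map_prod (sgen j) (sgen j)) A" for A
    by (rule inj_onI) (metis map_prod_simp sgen_sgen_apply prod.exhaust)
qed

lemma ninv_comp_sgen_ascent:
  assumes "1 \<le> j" "j < n" "x j < x (Suc j)"
  shows "ninv n (x \<circ> sgen j) = Suc (ninv n x)"
proof -
  have new: "(j, Suc j) \<in> inversions n (x \<circ> sgen j)" and old: "(j, Suc j) \<notin> inversions n x"
    using assms by (simp_all add: adjacent_in_inversions_iff sgen_def)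
  have "ninv n (x \<circ> sgen j) = Suc (card (inversions n (x \<circ> sgen j) - {(j, Suc j)}))"
    unfolding ninv_def by (rule card_Suc_Diff1[symmetric, OF finite_inversions new])
  also have "\<dots> = Suc (card (inversions n x - {(j, Suc j)}))"
    using card_inversions_comp_sgen[OF assms(1,2)] by simp
  also have "\<dots> = Suc (ninv n x)"
    unfolding ninv_def using old by simp
  finally show ?thesis .
qed

lemma ninv_comp_sgen_descent:
  assumes "1 \<le> j" "j < n" "x (Suc j) < x j"
  shows "ninv n x = Suc (ninv n (x \<circ> sgen j))"
proof -
  have "(x \<circ> sgen j) j < (x \<circ> sgen j) (Suc j)"
    using assms(3) by (simp add: sgen_def)
  then show ?thesis
    using ninv_comp_sgen_ascent[OF assms(1,2), of "x \<circ> sgen j"] by (simp add: comp_assoc)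
qed

lemma ninv_wprod_le: "set ws \<subseteq> {1..<n} \<Longrightarrow> ninv n (wprod ws) \<le> length ws"
proof (induction ws rule: rev_induct)
  case Nil
  show ?case
    using inversions_id[of n] by (simp add: ninv_def id_def)
next
  case (snoc j ws)
  have "wprod ws permutes {1..n}" "1 \<le> j" "j < n"
    using snoc.prems wprod_permutes[of ws n] by auto
  then have "ninv n (wprod ws \<circ> sgen j) \<le> Suc (ninv n (wprod ws))"
    using ninv_comp_sgen_ascent ninv_comp_sgen_descent permutes_apply_Suc_neq
    by (metis le_SucI le_refl linorder_neqE_nat)
  moreover have "ninv n (wprod ws) \<le> length ws"
    using snoc by simp
  ultimately show ?case
    unfolding wprod_snoc length_append_singleton by linarith
qed

lemma permutes_ascending_eq_id:
  assumes x: "x permutes {1..n}" and asc: "\<And>j. 1 \<le> j \<Longrightarrow> j < n \<Longrightarrow> x j < x (Suc j)"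
  shows "x = id"
proof -
  let ?xs = "[1..<Suc n]"
  have sorted: "sorted_wrt (<) (map x ?xs)"
    using asc by (subst sorted_wrt_iff_nth_Suc_transp) (auto simp del: upt_Suc)
  have set: "set (map x ?xs) = set ?xs"
    by (simp only: set_map set_upt atLeastLessThanSuc_atLeastAtMost permutes_image[OF x])
  have "map x ?xs = ?xs"
    using sorted set by (metis sorted_distinct_set_unique strict_sorted_iff sorted_wrt_upt)
  then have "x p = p" if "p \<in> {1..n}" for p
    using that by (simp add: map_eq_conv[where g = id, simplified]) (metis le_eq_less_or_eq)
  then show ?thesis
    using permutes_not_in[OF x] by (auto simp: fun_eq_iff)
qed

lemma wprod_of_length_ninv:
  "x permutes {1..n} \<Longrightarrow> \<exists>ws. set ws \<subseteq> {1..<n} \<and> wprod ws = x \<and> length ws = ninv n x"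
proof (induction "ninv n x" arbitrary: x)
  case 0
  then have "inversions n x = {}"
    by (simp add: ninv_def)
  then have "x j < x (Suc j)" if "1 \<le> j" "j < n" for j
    using adjacent_in_inversions_iff[OF that, of x] permutes_apply_Suc_neq[OF 0(2), of j] by auto
  then have "x = id"
    by (rule permutes_ascending_eq_id[OF 0(2)])
  then show ?case
    using 0 by (intro exI[of _ "[]"]) simp
next
  case (Suc k)
  then have "x \<noteq> id"
    by (auto simp: ninv_def inversions_id)
  then obtain j where j: "1 \<le> j" "j < n" "x (Suc j) < x j"
    using permutes_ascending_eq_id[OF Suc(3)] permutes_apply_Suc_neq[OF Suc(3)]
    by (metis linorder_neqE_nat)
  then obtain ws where ws: "set ws \<subseteq> {1..<n}" "wprod ws = x \<circ> sgen j" "length ws = k"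
    using Suc ninv_comp_sgen_descent[OF j] permutes_comp_sgen by (metis Suc_inject)
  then have "wprod (ws @ [j]) = x"
    by (simp add: wprod_snoc comp_assoc)
  then show ?case
    using ws j Suc(2) by (intro exI[of _ "ws @ [j]"]) auto
qed

lemma clen_eq_ninv: "x permutes {1..n} \<Longrightarrow> clen n x = ninv n x"
  unfolding clen_def is_word_def
  by (rule Least_equality) (use wprod_of_length_ninv ninv_wprod_le in blast)+

section \<open>Support and invariant initial segments\<close>

definition splits_at :: "(nat \<Rightarrow> nat) \<Rightarrow> nat \<Rightarrow> bool" where
  "splits_at x m \<longleftrightarrow> x ` {1..m} = {1..m}"

lemma splits_at_0 [simp]: "splits_at x 0"
  by (simp add: splits_at_def)

lemma splits_at_comp: "splits_at x m \<Longrightarrow> splits_at y m \<Longrightarrow> splits_at (x \<circ> y) m"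
  unfolding splits_at_def by (metis image_comp)

lemma splits_at_sgen:
  assumes "1 \<le> j" "j \<noteq> m"
  shows "splits_at (sgen j) m"
proof -
  have "sgen j ` {1..m} \<subseteq> {1..m}"
    using assms by (auto simp: sgen_def)
  moreover from image_mono[OF this, of "sgen j"] have "{1..m} \<subseteq> sgen j ` {1..m}"
    by (simp add: image_comp)
  ultimately show ?thesis
    by (simp add: splits_at_def)
qed

lemma splits_at_wprod: "(\<And>j. j \<in> set ws \<Longrightarrow> 1 \<le> j \<and> j \<noteq> m) \<Longrightarrow> splits_at (wprod ws) m"
proof (induction ws)
  case Nil
  show ?case
    by (simp add: splits_at_def)
next
  case (Cons i ws)
  then show ?case
    unfolding wprod_Cons by (intro splits_at_comp splits_at_sgen) auto
qed

lemma splits_at_le_iff: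
  assumes "x permutes {1..n}" "splits_at x m"
  shows "x p \<le> m \<longleftrightarrow> p \<le> m"
proof (cases "p = 0")
  case True
  then show ?thesis
    using permutes_not_in[OF assms(1)] by simp
next
  case False
  then have "1 \<le> x p"
    using permutes_not_in[OF assms(1)] permutes_in_image[OF assms(1)]
    by (metis atLeastAtMost_iff less_one not_le)
  then have "x p \<le> m \<longleftrightarrow> x p \<in> x ` {1..m}"
    using assms(2) by (auto simp: splits_at_def)
  also have "\<dots> \<longleftrightarrow> p \<in> {1..m}"
    using permutes_inj[OF assms(1)] by (simp add: inj_image_mem_iff)
  finally show ?thesis
    using False by simp
qed

lemma splits_at_middle_ascent:
  assumes x: "x permutes {1..n}" and "splits_at x m" "splits_at x (Suc (Suc m))"
    and "x (Suc m) < x (Suc (Suc m))"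
  shows "splits_at x (Suc m)"
proof -
  have "x (Suc m) = Suc m"
    using assms splits_at_le_iff[OF x assms(2), of "Suc m"]
      splits_at_le_iff[OF x assms(3), of "Suc (Suc m)"] by simp
  then show ?thesis
    using assms(2) by (simp add: splits_at_def atLeastAtMostSuc_conv)
qed

definition has_inversion_across :: "nat \<Rightarrow> (nat \<Rightarrow> nat) \<Rightarrow> nat \<Rightarrow> bool" where
  "has_inversion_across n x m \<longleftrightarrow> (\<exists>(p, q) \<in> inversions n x. x q \<le> m \<and> m < x p)"

lemma splits_at_imp_no_inversion_across:
  assumes "x permutes {1..n}" "splits_at x m"
  shows "\<not> has_inversion_across n x m"
proof -
  have "q < p" if "x q \<le> m" "m < x p" for p q
    using that splits_at_le_iff[OF assms, of q] splits_at_le_iff[OF assms, of p] by simp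
  then show ?thesis
    by (fastforce simp: has_inversion_across_def inversions_def)
qed

lemma has_inversion_across_comp_sgen:
  assumes "1 \<le> j" "j < n" "y j < y (Suc j)" "has_inversion_across n y m"
  shows "has_inversion_across n (y \<circ> sgen j) m"
proof -
  obtain p q where pq: "(p, q) \<in> inversions n y" "y q \<le> m" "m < y p"
    using assms(4) by (auto simp: has_inversion_across_def)
  then have "(p, q) \<noteq> (j, Suc j)"
    using assms(3) by auto
  with pq(1) have "(sgen j p, sgen j q) \<in> inversions n (y \<circ> sgen j)"
    using inversions_comp_sgen[OF assms(1,2), of y] by auto
  then show ?thesis
    using pq(2,3) unfolding has_inversion_across_def by force
qed

lemma has_inversion_across_comp_sgen_self:
  assumes "1 \<le> m" "m < n" "y permutes {1..n}" "splits_at y m"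
  shows "has_inversion_across n (y \<circ> sgen m) m"
proof -
  have "y m \<le> m" "m < y (Suc m)"
    using splits_at_le_iff[OF assms(3,4), of m] splits_at_le_iff[OF assms(3,4), of "Suc m"] by auto
  then show ?thesis
    using assms(1,2) unfolding has_inversion_across_def inversions_def
    by (intro bexI[of _ "(m, Suc m)"]) (auto simp: sgen_def)
qed

text \<open>Along a reduced word each new letter s_j creates one inversion and transports the old ones,
  so inversions across m persist; and appending s_m to a prefix that splits at m creates one.\<close>

lemma reduced_wprod_avoids_split:
  assumes "set ws \<subseteq> {1..<n}" "ninv n (wprod ws) = length ws"
    and "\<not> has_inversion_across n (wprod ws) m"
  shows "m \<notin> set ws \<and> splits_at (wprod ws) m"
  using assms
proof (induction ws rule: rev_induct)
  case Nil
  show ?case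
    by (simp add: splits_at_def)
next
  case (snoc j ws)
  define y where "y = wprod ws"
  have j: "1 \<le> j" "j < n" and ws: "set ws \<subseteq> {1..<n}"
    using snoc.prems(1) by auto
  have y: "y permutes {1..n}"
    unfolding y_def using ws by (rule wprod_permutes)
  have long: "ninv n (y \<circ> sgen j) = Suc (length ws)"
    using snoc.prems(2) unfolding y_def wprod_snoc length_append_singleton .
  have short: "ninv n y \<le> length ws"
    unfolding y_def using ws by (rule ninv_wprod_le)
  have ascent: "y j < y (Suc j)"
  proof (rule ccontr)
    assume "\<not> y j < y (Suc j)"
    then have "y (Suc j) < y j"
      using permutes_apply_Suc_neq[OF y, of j] by linarith
    then show False
      using ninv_comp_sgen_descent[OF j] long short by simp
  qed
  then have "ninv n y = length ws"
    using long ninv_comp_sgen_ascent[OF j] by simp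
  moreover have "\<not> has_inversion_across n y m"
    using snoc.prems(3) has_inversion_across_comp_sgen[OF j ascent] unfolding y_def wprod_snoc by blast
  ultimately have "m \<notin> set ws" and y_splits: "splits_at y m"
    using snoc.IH ws by (auto simp: y_def)
  have "j \<noteq> m"
  proof
    assume "j = m"
    then show False
      using snoc.prems(3) has_inversion_across_comp_sgen_self[OF j[unfolded \<open>j = m\<close>] y y_splits]
      unfolding y_def wprod_snoc by blast
  qed
  have "splits_at (wprod (ws @ [j])) m"
    unfolding wprod_snoc y_def[symmetric] using y_splits splits_at_sgen[OF j(1) \<open>j \<noteq> m\<close>]
    by (rule splits_at_comp)
  with \<open>m \<notin> set ws\<close> \<open>j \<noteq> m\<close> show ?case
    by simp
qed

lemma supp_eq_non_splits:
  assumes "x permutes {1..n}"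
  shows "supp n x = {m \<in> {1..<n}. \<not> splits_at x m}"
proof (intro set_eqI iffI)
  fix m
  assume "m \<in> supp n x"
  then obtain ws where ws: "set ws \<subseteq> {1..<n}" "wprod ws = x" "length ws = ninv n x" "m \<in> set ws"
    using clen_eq_ninv[OF assms] by (auto simp: supp_def reduced_word_def is_word_def)
  then have "\<not> splits_at x m"
    using reduced_wprod_avoids_split[OF ws(1)] splits_at_imp_no_inversion_across[OF assms] by auto
  then show "m \<in> {m \<in> {1..<n}. \<not> splits_at x m}"
    using ws by auto
next
  fix m
  assume m: "m \<in> {m \<in> {1..<n}. \<not> splits_at x m}"
  obtain ws where ws: "set ws \<subseteq> {1..<n}" "wprod ws = x" "length ws = ninv n x"
    using wprod_of_length_ninv[OF assms] by blast
  have "m \<in> set ws"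
  proof (rule ccontr)
    assume "m \<notin> set ws"
    then have "splits_at (wprod ws) m"
      using ws(1) by (intro splits_at_wprod) auto
    then show False
      using m ws(2) by simp
  qed
  then show "m \<in> supp n x"
    using ws clen_eq_ninv[OF assms] by (auto simp: supp_def reduced_word_def is_word_def)
qed

section \<open>Cutting a permutation at an invariant initial segment\<close>

definition lower_part :: "nat \<Rightarrow> (nat \<Rightarrow> nat) \<Rightarrow> nat \<Rightarrow> nat" where
  "lower_part m x = (\<lambda>p. if p \<le> m then x p else p)"

definition upper_part :: "nat \<Rightarrow> (nat \<Rightarrow> nat) \<Rightarrow> nat \<Rightarrow> nat" where
  "upper_part m x = (\<lambda>p. if p \<le> m then p else x p)"

locale split_permutation =
  fixes n m :: nat and x :: "nat \<Rightarrow> nat"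
  assumes x: "x permutes {1..n}" and split: "splits_at x m"
begin

lemma lower_part_comp_upper_part: "lower_part m x \<circ> upper_part m x = x"
  and upper_part_comp_lower_part: "upper_part m x \<circ> lower_part m x = x"
  using splits_at_le_iff[OF x split] by (auto simp: fun_eq_iff lower_part_def upper_part_def)

lemma lower_part_permutes: "lower_part m x permutes {1..n}"
proof (rule inj_imp_permutes)
  show "inj_on (lower_part m x) {1..n}"
    using splits_at_le_iff[OF x split] permutes_inj[OF x]
    by (intro inj_onI) (auto simp: lower_part_def dest: injD split: if_splits)
qed (use permutes_in_image[OF x] permutes_not_in[OF x] in \<open>auto simp: lower_part_def\<close>)

lemma upper_part_permutes: "upper_part m x permutes {1..n}"
proof (rule inj_imp_permutes)
  show "inj_on (upper_part m x) {1..n}"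
    using splits_at_le_iff[OF x split] permutes_inj[OF x]
    by (intro inj_onI) (auto simp: upper_part_def dest: injD split: if_splits)
qed (use permutes_in_image[OF x] permutes_not_in[OF x] in \<open>auto simp: upper_part_def\<close>)

lemma splits_at_lower_part_above: "m \<le> k \<Longrightarrow> splits_at (lower_part m x) k"
proof -
  assume "m \<le> k"
  then have "{1..k} = {1..m} \<union> {m<..k}"
    by auto
  moreover have "lower_part m x ` {1..m} = {1..m}" "lower_part m x ` {m<..k} = {m<..k}"
    using split by (auto simp: splits_at_def lower_part_def)
  ultimately show ?thesis
    by (simp add: splits_at_def image_Un)
qed

lemma splits_at_upper_part_below: "k \<le> m \<Longrightarrow> splits_at (upper_part m x) k"
  by (auto simp: splits_at_def upper_part_def)

lemma splits_at_lower_part: "splits_at x k \<Longrightarrow> splits_at (lower_part m x) k"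
proof (cases "m \<le> k")
  case False
  then have "lower_part m x ` {1..k} = x ` {1..k}"
    by (auto simp: lower_part_def)
  then show "splits_at x k \<Longrightarrow> ?thesis"
    by (simp add: splits_at_def)
qed (simp add: splits_at_lower_part_above)

lemma splits_at_upper_part: "splits_at x k \<Longrightarrow> splits_at (upper_part m x) k"
proof (cases "m \<le> k")
  case True
  then have "{1..k} = {1..m} \<union> {m<..k}"
    by auto
  moreover have "upper_part m x ` {m<..k} = x ` {m<..k}" "upper_part m x ` {1..m} = x ` {1..m}"
    using split by (auto simp: splits_at_def upper_part_def)
  ultimately have "upper_part m x ` {1..k} = x ` {1..k}"
    by (simp add: image_Un)
  then show "splits_at x k \<Longrightarrow> ?thesis"
    by (simp add: splits_at_def)
qed (simp add: splits_at_upper_part_below)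

end

section \<open>Parabolic decompositions and irreducibility\<close>

lemma parab_permutes: "J \<subseteq> {1..<n} \<Longrightarrow> v \<in> parab J \<Longrightarrow> v permutes {1..n}"
  unfolding parab_def using wprod_permutes by blast

lemma parab_splits_at: "J \<subseteq> {1..<n} \<Longrightarrow> v \<in> parab J \<Longrightarrow> m \<notin> J \<Longrightarrow> splits_at v m"
  unfolding parab_def by (auto intro!: splits_at_wprod)

lemma parab_singleton: "v \<in> parab {i} \<Longrightarrow> v = id \<or> v = sgen i"
proof -
  have "wprod ws = id \<or> wprod ws = sgen i" if "set ws \<subseteq> {i}" for ws
    using that by (induction ws) auto
  then show "v \<in> parab {i} \<Longrightarrow> ?thesis"
    by (auto simp: parab_def)
qed

lemma parabolic_decomp_left_factor:
  assumes "parabolic_decomp n J w u v"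
  obtains ws where "set ws \<subseteq> J" "u = w \<circ> wprod ws"
proof -
  obtain ws where ws: "set ws \<subseteq> J" "v = wprod ws"
    using assms by (auto simp: parabolic_decomp_def parab_def)
  have "w \<circ> wprod (rev ws) = u \<circ> (wprod ws \<circ> wprod (rev ws))"
    using assms ws(2) by (simp add: parabolic_decomp_def comp_assoc)
  then have "u = w \<circ> wprod (rev ws)"
    by (simp add: wprod_comp_wprod_rev)
  with ws(1) show thesis
    by (intro that[of "rev ws"]) auto
qed

lemma parabolic_decomp_left_permutes:
  assumes "w permutes {1..n}" "J \<subseteq> {1..<n}" "parabolic_decomp n J w u v"
  shows "u permutes {1..n}"
proof -
  obtain ws where "set ws \<subseteq> J" "u = w \<circ> wprod ws"
    using parabolic_decomp_left_factor[OF assms(3)] .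
  then show ?thesis
    using assms(1,2) wprod_permutes[of ws n] permutes_compose by blast
qed

lemma parabolic_decomp_left_ascent:
  assumes w: "w permutes {1..n}" and J: "J \<subseteq> {1..<n}" and decomp: "parabolic_decomp n J w u v"
    and "j \<in> J"
  shows "u j < u (Suc j)"
proof (rule ccontr)
  assume "\<not> u j < u (Suc j)"
  have u: "u permutes {1..n}"
    using parabolic_decomp_left_permutes[OF w J decomp] .
  have j: "1 \<le> j" "j < n"
    using \<open>j \<in> J\<close> J by auto
  obtain ws where ws: "set ws \<subseteq> J" "u = w \<circ> wprod ws"
    using parabolic_decomp_left_factor[OF decomp] .
  have "wprod (ws @ [j]) \<in> parab J"
    using ws(1) \<open>j \<in> J\<close> by (auto simp: parab_def intro!: exI[of _ "ws @ [j]"])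
  then have "clen n u \<le> clen n (w \<circ> wprod (ws @ [j]))"
    using decomp unfolding parabolic_decomp_def by blast
  also have "w \<circ> wprod (ws @ [j]) = u \<circ> sgen j"
    by (simp add: ws(2) wprod_snoc comp_assoc)
  finally have "ninv n u \<le> ninv n (u \<circ> sgen j)"
    unfolding clen_eq_ninv[OF u] clen_eq_ninv[OF permutes_comp_sgen[OF u j]] .
  moreover have "u (Suc j) < u j"
    using \<open>\<not> u j < u (Suc j)\<close> permutes_apply_Suc_neq[OF u, of j] by linarith
  ultimately show False
    using ninv_comp_sgen_descent[OF j] by simp
qed

lemma singleton_parabolic_decomp_right_descent:
  assumes w: "w permutes {1..n}" and i: "1 \<le> i" "i < n"
    and decomp: "parabolic_decomp n {i} w u v" and "i \<in> DL n v"
  shows "i \<in> DR n w"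
proof -
  have "clen n id = 0"
    unfolding clen_def by (rule Least_eq_0) (auto simp: is_word_def intro!: exI[of _ "[]"])
  then have "v \<noteq> id"
    using \<open>i \<in> DL n v\<close> by (auto simp: DL_def)
  then have "v = sgen i"
    using decomp parab_singleton by (auto simp: parabolic_decomp_def)
  then have wu: "w = u \<circ> sgen i" "w \<circ> sgen i = u"
    using decomp by (simp_all add: parabolic_decomp_def comp_assoc)
  have u: "u permutes {1..n}"
    using parabolic_decomp_left_permutes[OF w _ decomp] i by auto
  have "u i < u (Suc i)"
    using parabolic_decomp_left_ascent[OF w _ decomp] i by auto
  then have "clen n w = Suc (clen n u)"
    using ninv_comp_sgen_ascent[OF i] clen_eq_ninv[OF w] clen_eq_ninv[OF u] wu(1) by simp
  then show ?thesis
    using wu(2) i by (simp add: DR_def)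
qed

lemma bruhat_irreducible_not_splits_at:
  "bruhat_irreducible n w \<Longrightarrow> w permutes {1..n} \<Longrightarrow> k \<in> {1..<n} \<Longrightarrow> \<not> splits_at w k"
  using supp_eq_non_splits by (auto simp: bruhat_irreducible_def)

lemma bruhat_irreducible_no_splitting_factorization:
  assumes irr: "bruhat_irreducible n w" and w: "w permutes {1..n}"
    and x: "x permutes {1..n}" and y: "y permutes {1..n}" and "w = x \<circ> y"
    and cover: "\<And>k. k \<in> {1..<n} \<Longrightarrow> splits_at x k \<or> splits_at y k"
    and "k \<in> {1..<n}" "splits_at x k" and "l \<in> {1..<n}" "splits_at y l"
  shows False
proof -
  have "x \<noteq> id" "y \<noteq> id"
    using bruhat_irreducible_not_splits_at[OF irr w] assms(5,7-10) by auto
  moreover have "supp n x \<inter> supp n y = {}"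
    using supp_eq_non_splits[OF x] supp_eq_non_splits[OF y] cover by auto
  ultimately show False
    using irr x y \<open>w = x \<circ> y\<close> by (auto simp: bruhat_irreducible_def sym_group_def)
qed

section \<open>Almost reducible elements\<close>

locale almost_reducible_factorization =
  fixes n i :: nat and w u v :: "nat \<Rightarrow> nat" and J :: "nat set"
  assumes irreducible: "bruhat_irreducible n w"
    and w_permutes: "w permutes {1..n}"
    and u_permutes: "u permutes {1..n}"
    and v_permutes: "v permutes {1..n}"
    and factorization: "w = u \<circ> v"
    and J_subset: "J \<subseteq> {1..<n}"
    and i_in_J: "i \<in> J"
    and u_splits: "\<And>j. j \<in> J \<Longrightarrow> j \<noteq> i \<Longrightarrow> splits_at u j"
    and u_not_splits: "\<not> splits_at u i"
    and u_ascent: "u i < u (Suc i)"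
    and v_splits: "\<And>k. k \<notin> J \<Longrightarrow> splits_at v k"
begin

lemmas no_splitting_factorization =
  bruhat_irreducible_no_splitting_factorization[OF irreducible w_permutes]

lemma J_interval_below:
  assumes "j \<in> J" "j \<le> g" "g \<le> i"
  shows "g \<in> J"
proof (rule ccontr)
  assume "g \<notin> J"
  then have g: "j < g" "g < i" and "splits_at v g"
    using assms i_in_J v_splits by (auto simp: le_less)
  then interpret cut: split_permutation n g v
    using v_permutes by unfold_locales
  have factors: "w = (u \<circ> upper_part g v) \<circ> lower_part g v"
    using factorization cut.upper_part_comp_lower_part by (simp add: comp_assoc)
  show False
  proof (rule no_splitting_factorization[where k = j and l = i, OF _ _ factors])
    show "u \<circ> upper_part g v permutes {1..n}"
      by (rule permutes_compose[OF cut.upper_part_permutes u_permutes])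
    show "lower_part g v permutes {1..n}"
      by (rule cut.lower_part_permutes)
    show "splits_at (u \<circ> upper_part g v) j"
      using assms(1) g by (intro splits_at_comp u_splits cut.splits_at_upper_part_below) auto
    show "splits_at (lower_part g v) i"
      using g by (intro cut.splits_at_lower_part_above) simp
    show "splits_at (u \<circ> upper_part g v) k \<or> splits_at (lower_part g v) k" for k
    proof (cases "g \<le> k")
      case False
      then show ?thesis
        using g u_splits v_splits cut.splits_at_lower_part cut.splits_at_upper_part_below
        by (metis less_le_not_le nat_le_linear splits_at_comp)
    qed (simp add: cut.splits_at_lower_part_above)
  qed (use assms(1) J_subset i_in_J in auto)
qed

lemma J_interval_above:
  assumes "j \<in> J" "i \<le> g" "g \<le> j"
  shows "g \<in> J"
proof (rule ccontr)
  assume "g \<notin> J"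
  then have g: "i < g" "g < j" and "splits_at v g"
    using assms i_in_J v_splits by (auto simp: le_less)
  then interpret cut: split_permutation n g v
    using v_permutes by unfold_locales
  have factors: "w = (u \<circ> lower_part g v) \<circ> upper_part g v"
    using factorization cut.lower_part_comp_upper_part by (simp add: comp_assoc)
  show False
  proof (rule no_splitting_factorization[where k = j and l = i, OF _ _ factors])
    show "u \<circ> lower_part g v permutes {1..n}"
      by (rule permutes_compose[OF cut.lower_part_permutes u_permutes])
    show "upper_part g v permutes {1..n}"
      by (rule cut.upper_part_permutes)
    show "splits_at (u \<circ> lower_part g v) j"
      using assms(1) g by (intro splits_at_comp u_splits cut.splits_at_lower_part_above) auto
    show "splits_at (upper_part g v) i"
      using g by (intro cut.splits_at_upper_part_below) simp
    show "splits_at (u \<circ> lower_part g v) k \<or> splits_at (upper_part g v) k" for k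
    proof (cases "k \<le> g")
      case False
      then show ?thesis
        using g u_splits v_splits cut.splits_at_upper_part cut.splits_at_lower_part_above
        by (metis less_le_not_le nat_le_linear splits_at_comp)
    qed (simp add: cut.splits_at_upper_part_below)
  qed (use assms(1) J_subset i_in_J in auto)
qed

lemma J_reaches_top:
  assumes "j \<in> J" "i < j"
  shows "n - 1 \<in> J"
proof -
  define b where "b = Max J"
  have finite: "finite J"
    using J_subset finite_subset by blast
  have b_max: "k \<le> b" if "k \<in> J" for k
    using Max_ge[OF finite that] by (simp add: b_def)
  have "b \<in> J"
    using Max_in[OF finite] assms(1) by (auto simp: b_def)
  then have b: "b \<in> J" "i < b" "b < n"
    using assms b_max[OF assms(1)] J_subset by auto
  have "\<not> Suc b < n"
  proof
    assume "Suc b < n"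
    interpret cut: split_permutation n b u
      using u_permutes u_splits b by unfold_locales auto
    have factors: "w = upper_part b u \<circ> (lower_part b u \<circ> v)"
      unfolding comp_assoc[symmetric] cut.upper_part_comp_lower_part by (rule factorization)
    have "Suc b \<notin> J"
      using b_max by fastforce
    show False
    proof (rule no_splitting_factorization[where k = i and l = "Suc b", OF _ _ factors])
      show "upper_part b u permutes {1..n}"
        by (rule cut.upper_part_permutes)
      show "lower_part b u \<circ> v permutes {1..n}"
        by (rule permutes_compose[OF v_permutes cut.lower_part_permutes])
      show "splits_at (upper_part b u) i"
        using b by (intro cut.splits_at_upper_part_below) simp
      show "splits_at (lower_part b u \<circ> v) (Suc b)"
        using \<open>Suc b \<notin> J\<close> by (intro splits_at_comp cut.splits_at_lower_part_above v_splits) simp_all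
      show "splits_at (upper_part b u) k \<or> splits_at (lower_part b u \<circ> v) k" for k
      proof (cases "k \<le> b")
        case False
        then show ?thesis
          using b_max v_splits cut.splits_at_lower_part_above splits_at_comp by (meson nat_le_linear)
      qed (simp add: cut.splits_at_upper_part_below)
    qed (use \<open>Suc b < n\<close> i_in_J J_subset in auto)
  qed
  then have "b = n - 1"
    using b by linarith
  then show ?thesis
    using b by simp
qed

lemma J_reaches_bottom:
  assumes "j \<in> J" "j < i"
  shows "1 \<in> J"
proof -
  define a where "a = Min J"
  have finite: "finite J"
    using J_subset finite_subset by blast
  have a_min: "a \<le> k" if "k \<in> J" for k
    using Min_le[OF finite that] by (simp add: a_def)
  have "a \<in> J"
    using Min_in[OF finite] assms(1) by (auto simp: a_def)
  then have a: "a \<in> J" "a < i" "1 \<le> a"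
    using assms a_min[OF assms(1)] J_subset by auto
  have "a = 1"
  proof (rule ccontr)
    assume "a \<noteq> 1"
    interpret cut: split_permutation n a u
      using u_permutes u_splits a by unfold_locales auto
    have factors: "w = lower_part a u \<circ> (upper_part a u \<circ> v)"
      unfolding comp_assoc[symmetric] cut.lower_part_comp_upper_part by (rule factorization)
    have "1 \<notin> J"
      using a_min a \<open>a \<noteq> 1\<close> by fastforce
    show False
    proof (rule no_splitting_factorization[where k = i and l = 1, OF _ _ factors])
      show "lower_part a u permutes {1..n}"
        by (rule cut.lower_part_permutes)
      show "upper_part a u \<circ> v permutes {1..n}"
        by (rule permutes_compose[OF v_permutes cut.upper_part_permutes])
      show "splits_at (lower_part a u) i"
        using a by (intro cut.splits_at_lower_part_above) simp
      show "splits_at (upper_part a u \<circ> v) 1"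
        using \<open>1 \<notin> J\<close> a by (intro splits_at_comp cut.splits_at_upper_part_below v_splits) simp_all
      show "splits_at (lower_part a u) k \<or> splits_at (upper_part a u \<circ> v) k" for k
      proof (cases "a \<le> k")
        case False
        then show ?thesis
          using a_min v_splits cut.splits_at_upper_part_below splits_at_comp by (meson nat_le_linear)
      qed (simp add: cut.splits_at_lower_part_above)
    qed (use i_in_J J_subset in auto)
  qed
  then show ?thesis
    using a by simp
qed

lemma J_one_sided:
  assumes "Suc i \<in> J"
  shows "1 < i \<and> i - 1 \<notin> J"
proof (rule ccontr)
  assume "\<not> (1 < i \<and> i - 1 \<notin> J)"
  moreover have "1 \<le> i"
    using i_in_J J_subset by auto
  ultimately have "splits_at u (i - 1)"
    using u_splits by (cases "i = 1") auto
  moreover have "splits_at u (Suc i)"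
    using u_splits assms by simp
  ultimately have "splits_at u i"
    using splits_at_middle_ascent[OF u_permutes, of "i - 1"] u_ascent \<open>1 \<le> i\<close> by simp
  with u_not_splits show False ..
qed

lemma J_cases: "J = {1..i} \<or> J = {i..<n} \<or> J = {i}"
proof -
  have below: "i - 1 \<in> J" if "j \<in> J" "j < i" for j
    using J_interval_below[OF that(1)] that by simp
  have above: "Suc i \<in> J" if "j \<in> J" "i < j" for j
    using J_interval_above[OF that(1)] that by simp
  consider "Suc i \<in> J" | "Suc i \<notin> J" "1 < i" "i - 1 \<in> J" | "Suc i \<notin> J" "\<not> (1 < i \<and> i - 1 \<in> J)"
    by blast
  then show ?thesis
  proof cases
    case 1
    then have "J \<subseteq> {i..<n}"
      using J_one_sided below J_subset by fastforce
    moreover have "{i..<n} \<subseteq> J"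
      using J_interval_above J_reaches_top[OF 1] by fastforce
    ultimately show ?thesis
      by blast
  next
    case 2
    then have "J \<subseteq> {1..i}"
      using above J_subset by fastforce
    moreover have "{1..i} \<subseteq> J"
      using J_interval_below J_reaches_bottom[OF 2(3)] 2(2) by fastforce
    ultimately show ?thesis
      by blast
  next
    case 3
    then have "J \<subseteq> {i}"
      using above below J_subset by fastforce
    then show ?thesis
      using i_in_J by blast
  qed
qed

end

lemma almost_reducible_factorizationI:
  assumes irr: "bruhat_irreducible n w" and w: "w permutes {1..n}" and J: "J \<subseteq> {1..<n}"
    and decomp: "parabolic_decomp n J w u v" and supp_u: "supp n u \<inter> J = {i}"
  shows "almost_reducible_factorization n i w u v J"
proof
  have "i \<in> J"
    using supp_u by auto
  then show "u i < u (Suc i)"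
    by (rule parabolic_decomp_left_ascent[OF w J decomp])
  show u: "u permutes {1..n}"
    by (rule parabolic_decomp_left_permutes[OF w J decomp])
  then show "splits_at u j" if "j \<in> J" "j \<noteq> i" for j
    using that J supp_u supp_eq_non_splits[OF u] by blast
  show "splits_at v k" if "k \<notin> J" for k
    using decomp parab_splits_at[OF J _ that] by (simp add: parabolic_decomp_def)
qed (use irr w J supp_u supp_eq_non_splits[OF parabolic_decomp_left_permutes[OF w J decomp]]
      decomp parab_permutes[OF J] in \<open>auto simp: parabolic_decomp_def\<close>)

theorem proposition5p2:
  fixes n i :: nat and w :: "nat \<Rightarrow> nat" and J :: "nat set"
  assumes "w \<in> sym_group n"
    and "bruhat_irreducible n w"
    and "almost_reducible n w J i"
  shows "J = {1..i} \<or> J = {i..<n}"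
proof -
  have w: "w permutes {1..n}"
    using assms(1) by (simp add: sym_group_def)
  obtain u v where BP: "BP_decomp n J w u v" and supp_u: "supp n u \<inter> J = {i}"
    and J: "J \<subseteq> {1..<n}" and not_DR: "i \<notin> DR n w"
    using assms(3) unfolding almost_reducible_def by blast
  then have decomp: "parabolic_decomp n J w u v" and "i \<in> DL n v" and "i \<in> J"
    by (auto simp: BP_decomp_def)
  interpret almost_reducible_factorization n i w u v J
    using almost_reducible_factorizationI[OF assms(2) w J decomp supp_u] .
  have "J \<noteq> {i}"
    using singleton_parabolic_decomp_right_descent[OF w _ _ _ \<open>i \<in> DL n v\<close>] decomp not_DR J \<open>i \<in> J\<close>
    by auto
  then show ?thesis
    using J_cases by blast
qed

end
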